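(* In the right-angled Artin group $A(P_3)=\langle a,b,c\mid ab=ba,\ bc=cb\rangle$ we have \[\langle ab,c\rangle\cap\langle a,bc\rangle\cap\langle a,c\rangle=[\langle a,c\rangle,\langle a,c\rangle].\]
   Context: $[\langle a,c\rangle,\langle a,c\rangle]$ denotes the commutator (derived) subgroup of the subgroup $\langle a,c\rangle$. *)

theory Defs
  imports "HOL-Algebra.Algebra"
begin

type_synonym 'g letter = "'g \<times> bool"   (* (x, False) = x,  (x, True) = x^-1 *)
type_synonym 'g word = "'g letter list"

definition inv_letter :: "'g letter \<Rightarrow> 'g letter" where
  "inv_letter l = (fst l, \<not> snd l)"

inductive pres_rel :: "'g word set \<Rightarrow> 'g word \<Rightarrow> 'g word \<Rightarrow> bool" for R where
  pres_refl: "pres_rel R u u"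
| pres_sym: "pres_rel R u v \<Longrightarrow> pres_rel R v u"
| pres_trans: "pres_rel R u v \<Longrightarrow> pres_rel R v w \<Longrightarrow> pres_rel R u w"
| pres_cancel: "pres_rel R (u @ [x, inv_letter x] @ v) (u @ v)"
| pres_relator: "r \<in> R \<Longrightarrow> pres_rel R (u @ r @ v) (u @ v)"

definition pres_eqv :: "'g word set \<Rightarrow> ('g word \<times> 'g word) set" where
  "pres_eqv R = {(u, v). pres_rel R u v}"

definition presented_group :: "'g word set \<Rightarrow> 'g word set monoid" where
  "presented_group R =
     \<lparr>carrier = UNIV // pres_eqv R,
      monoid.mult = (\<lambda>x y. pres_eqv R `` {(SOME u. u \<in> x) @ (SOME v. v \<in> y)}),
      one = pres_eqv R `` {[]}\<rparr>"

definition pres_gen :: "'g word set \<Rightarrow> 'g \<Rightarrow> 'g word set" where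
  "pres_gen R x = pres_eqv R `` {[(x, False)]}"

datatype P3gen = Ga | Gb | Gc

definition P3_relators :: "P3gen word set" where
  "P3_relators = { [(Ga,False),(Gb,False),(Ga,True),(Gb,True)],
                   [(Gb,False),(Gc,False),(Gb,True),(Gc,True)] }"

definition AP3 :: "P3gen word set monoid" where
  "AP3 = presented_group P3_relators"

end

theory Submission
  imports Defs
begin

text \<open>Write H = <a,c> and let e_a, e_b, e_c be the exponent-sum homomorphisms into the
  integers; b commutes with H. For a homomorphism k into the integers, h |-> h b^(k h) is a
  homomorphism on H which fixes [H,H] pointwise, because k kills [H,H]; for k = e_a it maps H
  into <ab,c> and for k = e_c into <a,bc>, so [H,H] lies in the intersection.
  Conversely e_a = e_b on <ab,c>, e_b = e_c on <a,bc> and e_b = 0 on H, so e_a and e_c vanish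
  on the intersection. Since H/[H,H] is abelian and generated by the images of a and c, the
  image of x in it is a^(e_a x) c^(e_c x), which is trivial for such x.\<close>

lemma equiv_pres_eqv: "equiv UNIV (pres_eqv R)"
  unfolding pres_eqv_def equiv_def refl_on_def sym_def trans_def
  by (auto intro: pres_rel.intros)

lemma pres_rel_context: "pres_rel R u v \<Longrightarrow> pres_rel R (p @ u @ q) (p @ v @ q)"
proof (induction rule: pres_rel.induct)
  case (pres_cancel u x v)
  show ?case using pres_rel.pres_cancel[of R "p @ u" x "v @ q"] by simp
next
  case (pres_relator r u v)
  show ?case using pres_rel.pres_relator[OF pres_relator, of "p @ u" "v @ q"] by simp
qed (blast intro: pres_rel.intros)+

lemma pres_rel_append: "pres_rel R u u' \<Longrightarrow> pres_rel R v v' \<Longrightarrow> pres_rel R (u @ v) (u' @ v')"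
  using pres_rel_context[of R u u' "[]" v] pres_rel_context[of R v v' u' "[]"]
  by (auto intro: pres_trans)

lemma pres_class_eq_iff: "pres_eqv R `` {u} = pres_eqv R `` {v} \<longleftrightarrow> pres_rel R u v"
  using eq_equiv_class_iff[OF equiv_pres_eqv, of u v] by (simp add: pres_eqv_def)

lemma pres_rel_some_class: "pres_rel R u (SOME v. v \<in> pres_eqv R `` {u})"
proof -
  have "u \<in> pres_eqv R `` {u}" by (simp add: pres_eqv_def pres_refl)
  then have "(SOME v. v \<in> pres_eqv R `` {u}) \<in> pres_eqv R `` {u}" by (rule someI)
  then show ?thesis by (simp add: pres_eqv_def)
qed

lemma carrier_presented_group: "carrier (presented_group R) = range (\<lambda>u. pres_eqv R `` {u})"
  unfolding presented_group_def quotient_def by auto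

lemma one_presented_group: "\<one>\<^bsub>presented_group R\<^esub> = pres_eqv R `` {[]}"
  unfolding presented_group_def by simp

lemma mult_presented_group:
  "pres_eqv R `` {u} \<otimes>\<^bsub>presented_group R\<^esub> pres_eqv R `` {v} = pres_eqv R `` {u @ v}"
proof -
  have "pres_eqv R `` {(SOME w. w \<in> pres_eqv R `` {u}) @ (SOME w. w \<in> pres_eqv R `` {v})}
          = pres_eqv R `` {u @ v}"
    unfolding pres_class_eq_iff
    by (rule pres_rel_append[OF pres_sym[OF pres_rel_some_class] pres_sym[OF pres_rel_some_class]])
  then show ?thesis unfolding presented_group_def by simp
qed

lemma pres_rel_inverse_word: "pres_rel R (rev (map inv_letter u) @ u) []"
proof (induction u)
  case (Cons x u)
  have "pres_rel R (rev (map inv_letter u) @ [inv_letter x, x] @ u) (rev (map inv_letter u) @ u)"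
    using pres_cancel[of R _ "inv_letter x"] by (simp add: inv_letter_def)
  from pres_trans[OF this Cons.IH] show ?case by simp
qed (simp add: pres_refl)

lemma group_presented_group: "group (presented_group R)"
proof (rule groupI)
  fix x assume "x \<in> carrier (presented_group R)"
  then obtain u where u: "x = pres_eqv R `` {u}" by (auto simp: carrier_presented_group)
  have "pres_eqv R `` {rev (map inv_letter u)} \<otimes>\<^bsub>presented_group R\<^esub> x = \<one>\<^bsub>presented_group R\<^esub>"
    unfolding u mult_presented_group one_presented_group pres_class_eq_iff
    by (rule pres_rel_inverse_word)
  then show "\<exists>y\<in>carrier (presented_group R). y \<otimes>\<^bsub>presented_group R\<^esub> x = \<one>\<^bsub>presented_group R\<^esub>"
    by (auto simp: carrier_presented_group)
qed (auto simp: carrier_presented_group one_presented_group mult_presented_group)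

lemma pres_gen_commute:
  assumes "[(x, False), (y, False), (x, True), (y, True)] \<in> R"
  shows "pres_gen R x \<otimes>\<^bsub>presented_group R\<^esub> pres_gen R y
           = pres_gen R y \<otimes>\<^bsub>presented_group R\<^esub> pres_gen R x"
proof -
  have relator: "pres_rel R [(x, False), (y, False), (x, True), (y, True), (y, False), (x, False)]
          [(y, False), (x, False)]"
    using pres_relator[OF assms, of "[]" "[(y, False), (x, False)]"] by simp
  have cancel_y: "pres_rel R [(x, False), (y, False), (x, True), (y, True), (y, False), (x, False)]
                   [(x, False), (y, False), (x, True), (x, False)]"
    using pres_cancel[of R "[(x, False), (y, False), (x, True)]" "(y, True)" "[(x, False)]"]
    by (simp add: inv_letter_def)
  have cancel_x: "pres_rel R [(x, False), (y, False), (x, True), (x, False)] [(x, False), (y, False)]"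
    using pres_cancel[of R "[(x, False), (y, False)]" "(x, True)" "[]"] by (simp add: inv_letter_def)
  have "pres_rel R [(x, False), (y, False)] [(y, False), (x, False)]"
    using pres_trans[OF pres_sym[OF cancel_x] pres_trans[OF pres_sym[OF cancel_y] relator]] .
  then show ?thesis
    unfolding pres_gen_def mult_presented_group pres_class_eq_iff by simp
qed

definition exp_sum :: "'g \<Rightarrow> 'g word \<Rightarrow> int" where
  "exp_sum g w = sum_list (map (\<lambda>(h, inverted). if h = g then (if inverted then -1 else 1) else 0) w)"

lemma exp_sum_append [simp]: "exp_sum g (u @ v) = exp_sum g u + exp_sum g v"
  by (simp add: exp_sum_def)

lemma exp_sum_pres_rel:
  assumes "\<And>r. r \<in> R \<Longrightarrow> exp_sum g r = 0"
  shows "pres_rel R u v \<Longrightarrow> exp_sum g u = exp_sum g v"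
proof (induction rule: pres_rel.induct)
  case (pres_cancel u x v)
  show ?case by (cases x) (simp add: exp_sum_def inv_letter_def)
qed (simp_all add: assms)

text \<open>Read off an arbitrary representative, hence meaningful only when every relator has
  exponent sum zero.\<close>

definition pres_exp_sum :: "'g \<Rightarrow> 'g word set \<Rightarrow> int" where
  "pres_exp_sum g x = exp_sum g (SOME w. w \<in> x)"

lemma pres_exp_sum_class:
  assumes "\<And>r. r \<in> R \<Longrightarrow> exp_sum g r = 0"
  shows "pres_exp_sum g (pres_eqv R `` {u}) = exp_sum g u"
  unfolding pres_exp_sum_def by (rule sym, rule exp_sum_pres_rel[OF assms pres_rel_some_class])

lemma pres_exp_sum_hom:
  assumes "\<And>r. r \<in> R \<Longrightarrow> exp_sum g r = 0"
  shows "pres_exp_sum g \<in> hom (presented_group R) integer_group"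
  by (rule homI)
    (auto simp: carrier_presented_group mult_presented_group pres_exp_sum_class[OF assms])

lemma pres_exp_sum_pres_gen:
  assumes "\<And>r. r \<in> R \<Longrightarrow> exp_sum g r = 0"
  shows "pres_exp_sum g (pres_gen R h) = (if g = h then 1 else 0)"
  using pres_exp_sum_class[OF assms, where u = "[(h, False)]"] by (simp add: pres_gen_def exp_sum_def)

definition centralizer :: "('a, 'b) monoid_scheme \<Rightarrow> 'a \<Rightarrow> 'a set" where
  "centralizer G b = {z \<in> carrier G. z \<otimes>\<^bsub>G\<^esub> b = b \<otimes>\<^bsub>G\<^esub> z}"

lemma (in group) subgroup_centralizer:
  assumes b: "b \<in> carrier G"
  shows "subgroup (centralizer G b) G"
proof (rule subgroupI)
  fix x assume "x \<in> centralizer G b"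
  then have x: "x \<in> carrier G" and xb: "x \<otimes> b = b \<otimes> x" by (auto simp: centralizer_def)
  have "inv x \<otimes> b = inv x \<otimes> (b \<otimes> x) \<otimes> inv x" using x b by (simp add: m_assoc)
  also have "\<dots> = b \<otimes> inv x" using x b by (simp add: xb [symmetric] m_assoc [symmetric])
  finally show "inv x \<in> centralizer G b" using x by (simp add: centralizer_def)
next
  fix x y assume "x \<in> centralizer G b" "y \<in> centralizer G b"
  then show "x \<otimes> y \<in> centralizer G b"
    using b by (auto simp: centralizer_def m_assoc) (metis m_assoc)
qed (use b in \<open>auto simp: centralizer_def\<close>)

lemma (in group) generate_subset_centralizer:
  assumes "S \<subseteq> carrier G" "b \<in> carrier G" "\<And>s. s \<in> S \<Longrightarrow> s \<otimes> b = b \<otimes> s"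
  shows "generate G S \<subseteq> centralizer G b"
  using assms by (intro generate_subgroup_incl subgroup_centralizer) (auto simp: centralizer_def)

lemma (in group) hom_agree_on_generate:
  assumes "group K" "f \<in> hom G K" "g \<in> hom G K" "S \<subseteq> carrier G"
    and "\<And>s. s \<in> S \<Longrightarrow> f s = g s" "x \<in> generate G S"
  shows "f x = g x"
proof -
  interpret f: group_hom G K f using assms by (simp add: group_hom_def group_hom_axioms_def)
  interpret g: group_hom G K g using assms by (simp add: group_hom_def group_hom_axioms_def)
  show ?thesis
    using assms(6)
  proof (induction rule: generate.induct)
    case (inv h)
    then show ?case using assms(4,5) by auto
  next
    case (eng h k)
    then show ?case using generate_in_carrier[OF assms(4)] by simp
  qed (simp_all add: assms(5))
qed

lemma (in group) derived_subset_kernel: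
  assumes "comm_group K" "f \<in> hom G K" "H \<subseteq> carrier G"
  shows "derived G H \<subseteq> kernel G K f"
proof -
  have "derived G H \<subseteq> carrier G" using derived_in_carrier[OF assms(3)] .
  interpret group_hom G K f
    using assms comm_group.axioms(2) by (simp add: group_hom_def group_hom_axioms_def)
  have "f ` derived G H = derived K (f ` H)" by (rule derived_img[OF assms(3), symmetric])
  also have "\<dots> = {\<one>\<^bsub>K\<^esub>}"
    using assms(3) by (intro comm_group.derived_eq_singleton[OF assms(1)]) auto
  finally show ?thesis using \<open>derived G H \<subseteq> carrier G\<close> by (auto simp: kernel_def)
qed

lemma (in group) twisted_hom:
  assumes H: "subgroup H G" and b: "b \<in> carrier G" "H \<subseteq> centralizer G b"
    and f: "f \<in> hom G integer_group"
  shows "(\<lambda>h. h \<otimes> b [^] f h) \<in> hom (G\<lparr>carrier := H\<rparr>) G"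
proof (rule homI)
  fix h k assume "h \<in> carrier (G\<lparr>carrier := H\<rparr>)" "k \<in> carrier (G\<lparr>carrier := H\<rparr>)"
  then have hk: "h \<in> carrier G" "k \<in> carrier G" "k \<in> centralizer G b"
    using b subgroup.subset[OF H] by auto
  have "b [^] f h \<in> centralizer G k"
    using hk b by (intro subgroup_int_pow_closed subgroup_centralizer) (auto simp: centralizer_def)
  then have comm: "b [^] f h \<otimes> k = k \<otimes> b [^] f h" by (simp add: centralizer_def)
  have "h \<otimes> k \<otimes> b [^] f (h \<otimes> k) = h \<otimes> (k \<otimes> b [^] f h) \<otimes> b [^] f k"
    using hk b hom_mult[OF f] by (simp add: int_pow_mult m_assoc)
  also have "\<dots> = h \<otimes> b [^] f h \<otimes> (k \<otimes> b [^] f k)"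
    using hk b by (simp only: comm [symmetric]) (simp add: m_assoc)
  finally show "h \<otimes>\<^bsub>G\<lparr>carrier := H\<rparr>\<^esub> k \<otimes> b [^] f (h \<otimes>\<^bsub>G\<lparr>carrier := H\<rparr>\<^esub> k)
               = h \<otimes> b [^] f h \<otimes> (k \<otimes> b [^] f k)"
    by simp
qed (use subgroup.subset[OF H] b in auto)

lemma (in group) derived_generate_subset_twisted:
  assumes S: "S \<subseteq> carrier G" and b: "b \<in> carrier G" "\<And>s. s \<in> S \<Longrightarrow> s \<otimes> b = b \<otimes> s"
    and f: "f \<in> hom G integer_group"
  shows "derived G (generate G S) \<subseteq> generate G ((\<lambda>s. s \<otimes> b [^] f s) ` S)"
proof
  let ?H = "generate G S" and ?\<psi> = "\<lambda>h. h \<otimes> b [^] f h"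
  have H: "subgroup ?H G" using generate_is_subgroup[OF S] .
  have S_H: "S \<subseteq> ?H" by (auto intro: generate.incl)
  interpret \<psi>: group_hom "G\<lparr>carrier := ?H\<rparr>" G ?\<psi>
    using twisted_hom[OF H b(1) generate_subset_centralizer[OF S b] f] subgroup_imp_group[OF H]
    by (simp add: group_hom_def group_hom_axioms_def is_group)
  have image: "?\<psi> ` ?H = generate G (?\<psi> ` S)"
    using \<psi>.generate_img[of S] generate_consistent[OF S_H H] S_H by simp
  fix d assume d: "d \<in> derived G ?H"
  then have "f d = 0"
    using derived_subset_kernel[OF abelian_integer_group f subgroup.subset[OF H]]
    by (auto simp: kernel_def)
  then have "d = ?\<psi> d" using d derived_in_carrier[OF subgroup.subset[OF H]] by auto
  moreover have "d \<in> ?H" using d derived_incl[OF subset_refl H] by blast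
  ultimately show "d \<in> generate G (?\<psi> ` S)" using image by blast
qed

lemma (in group) generate_pair_kernels_subset_derived:
  assumes ac: "a \<in> carrier G" "c \<in> carrier G"
    and homs: "fa \<in> hom G integer_group" "fc \<in> hom G integer_group"
    and "fa a = 1" "fa c = 0" "fc a = 0" "fc c = 1"
  shows "generate G {a, c} \<inter> kernel G integer_group fa \<inter> kernel G integer_group fc
           \<subseteq> derived G (generate G {a, c})"
proof
  define H where "H = generate G {a, c}"
  define D where "D = derived G H"
  define Q where "Q = G\<lparr>carrier := H\<rparr> Mod D"
  have H: "subgroup H G" unfolding H_def using ac by (intro generate_is_subgroup) auto
  have ac_H: "{a, c} \<subseteq> H" unfolding H_def by (auto intro: generate.incl)
  interpret H: group "G\<lparr>carrier := H\<rparr>" using subgroup_imp_group[OF H] .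
  interpret D: normal D "G\<lparr>carrier := H\<rparr>" unfolding D_def by (rule derived_subgroup_is_normal[OF H])
  interpret Q: comm_group Q unfolding Q_def D_def by (rule derived_quot_of_subgroup_is_comm_group[OF H])
  have \<pi>: "(\<lambda>x. D #> x) \<in> hom (G\<lparr>carrier := H\<rparr>) Q"
    using D.r_coset_hom_Mod unfolding Q_def by simp
  have restrict: "f \<in> hom (G\<lparr>carrier := H\<rparr>) integer_group" if "f \<in> hom G integer_group" for f
    using that subgroup.subset[OF H] by (auto simp: hom_def)
  have pow_hom: "([^]\<^bsub>Q\<^esub>) (D #> x) \<in> hom integer_group Q" if "x \<in> H" for x
    using Q.hom_integer_group_pow hom_in_carrier[OF \<pi>] that by simp
  have abelianisation: "D #> x = (D #> a) [^]\<^bsub>Q\<^esub> fa x \<otimes>\<^bsub>Q\<^esub> (D #> c) [^]\<^bsub>Q\<^esub> fc x"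
    if "x \<in> H" for x
  proof (rule H.hom_agree_on_generate[OF Q.is_group \<pi>])
    show "(\<lambda>x. (D #> a) [^]\<^bsub>Q\<^esub> fa x \<otimes>\<^bsub>Q\<^esub> (D #> c) [^]\<^bsub>Q\<^esub> fc x) \<in> hom (G\<lparr>carrier := H\<rparr>) Q"
      using Group.hom_compose[OF restrict[OF homs(1)] pow_hom[of a]]
        Group.hom_compose[OF restrict[OF homs(2)] pow_hom[of c]] ac_H
      by (intro Q.hom_group_mult) (auto simp: comp_def)
    show "x \<in> generate (G\<lparr>carrier := H\<rparr>) {a, c}"
      using that generate_consistent[OF ac_H H] unfolding H_def by simp
    show "D #> s = (D #> a) [^]\<^bsub>Q\<^esub> fa s \<otimes>\<^bsub>Q\<^esub> (D #> c) [^]\<^bsub>Q\<^esub> fc s" if "s \<in> {a, c}" for s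
      using that assms(5-8) ac_H hom_in_carrier[OF \<pi>] by auto
  qed (use ac_H in simp)
  fix x assume x: "x \<in> H \<inter> kernel G integer_group fa \<inter> kernel G integer_group fc"
  then have "D #> x = \<one>\<^bsub>Q\<^esub>"
    using abelianisation[of x] by (auto simp: kernel_def)
  also have "\<dots> = D" unfolding Q_def by simp
  finally have "D #> x = D" .
  moreover have "x \<in> D #> x"
    using x rcos_self[OF _ derived_is_subgroup[OF subgroup.subset[OF H]]] by (auto simp: D_def kernel_def)
  ultimately show "x \<in> derived G H" unfolding D_def by simp
qed

lemma (in group) intersection_eq_derived_generate_pair:
  assumes gens: "a \<in> carrier G" "b \<in> carrier G" "c \<in> carrier G"
    and ab: "a \<otimes> b = b \<otimes> a" and bc: "b \<otimes> c = c \<otimes> b"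
    and homs: "ea \<in> hom G integer_group" "eb \<in> hom G integer_group" "ec \<in> hom G integer_group"
    and exps: "ea a = 1" "ea b = 0" "ea c = 0" "eb a = 0" "eb b = 1" "eb c = 0"
      "ec a = 0" "ec b = 0" "ec c = 1"
  shows "generate G {a \<otimes> b, c} \<inter> generate G {a, b \<otimes> c} \<inter> generate G {a, c}
           = derived G (generate G {a, c})"
proof (rule equalityI[OF subsetI])
  have mult: "e (x \<otimes> y) = e x + e y"
    if "e \<in> hom G integer_group" "x \<in> carrier G" "y \<in> carrier G" for e x y
    using hom_mult[OF that] by simp
  have zero_hom: "(\<lambda>_. 0) \<in> hom G integer_group" by (simp add: hom_def)
  fix x assume x: "x \<in> generate G {a \<otimes> b, c} \<inter> generate G {a, b \<otimes> c} \<inter> generate G {a, c}"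
  have "ea x = eb x"
    by (rule hom_agree_on_generate[OF group_integer_group homs(1,2), of "{a \<otimes> b, c}"])
      (use x gens exps mult[OF homs(1)] mult[OF homs(2)] in auto)
  moreover have "ec x = eb x"
    by (rule hom_agree_on_generate[OF group_integer_group homs(3,2), of "{a, b \<otimes> c}"])
      (use x gens exps mult[OF homs(3)] mult[OF homs(2)] in auto)
  moreover have "eb x = 0"
    by (rule hom_agree_on_generate[OF group_integer_group homs(2) zero_hom, of "{a, c}"])
      (use x gens exps in auto)
  moreover have "x \<in> carrier G" using x gens generate_in_carrier[of "{a, c}"] by auto
  ultimately show "x \<in> derived G (generate G {a, c})"
    using generate_pair_kernels_subset_derived[OF gens(1,3) homs(1,3)] x exps
    by (auto simp: kernel_def)
next
  have ac: "{a, c} \<subseteq> carrier G" using gens by simp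
  have central: "s \<otimes> b = b \<otimes> s" if "s \<in> {a, c}" for s using that ab bc by auto
  have "derived G (generate G {a, c}) \<subseteq> generate G {a \<otimes> b, c}"
    using derived_generate_subset_twisted[OF ac gens(2) central homs(1)] gens exps by simp
  moreover have "derived G (generate G {a, c}) \<subseteq> generate G {a, b \<otimes> c}"
    using derived_generate_subset_twisted[OF ac gens(2) central homs(3)] gens exps bc by simp
  moreover have "derived G (generate G {a, c}) \<subseteq> generate G {a, c}"
    using ac by (intro derived_incl generate_is_subgroup) auto
  ultimately show "derived G (generate G {a, c})
                     \<subseteq> generate G {a \<otimes> b, c} \<inter> generate G {a, b \<otimes> c} \<inter> generate G {a, c}"
    by blast
qed

lemma exp_sum_P3_relators: "r \<in> P3_relators \<Longrightarrow> exp_sum g r = 0"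
  unfolding P3_relators_def by (cases g) (auto simp: exp_sum_def)

theorem mainTheorem12:
  fixes a b c :: "P3gen word set"
  defines "a \<equiv> pres_gen P3_relators Ga"
      and "b \<equiv> pres_gen P3_relators Gb"
      and "c \<equiv> pres_gen P3_relators Gc"
  shows "generate AP3 {a \<otimes>\<^bsub>AP3\<^esub> b, c} \<inter> generate AP3 {a, b \<otimes>\<^bsub>AP3\<^esub> c} \<inter> generate AP3 {a, c}
           = derived AP3 (generate AP3 {a, c})"
proof (rule group.intersection_eq_derived_generate_pair
    [where ea = "pres_exp_sum Ga" and eb = "pres_exp_sum Gb" and ec = "pres_exp_sum Gc"])
  show "group AP3" unfolding AP3_def by (rule group_presented_group)
  show "a \<in> carrier AP3" "b \<in> carrier AP3" "c \<in> carrier AP3"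
    unfolding a_def b_def c_def pres_gen_def AP3_def by (simp_all add: carrier_presented_group)
  show "a \<otimes>\<^bsub>AP3\<^esub> b = b \<otimes>\<^bsub>AP3\<^esub> a" "b \<otimes>\<^bsub>AP3\<^esub> c = c \<otimes>\<^bsub>AP3\<^esub> b"
    unfolding a_def b_def c_def AP3_def by (rule pres_gen_commute, simp add: P3_relators_def)+
  have "pres_exp_sum g \<in> hom AP3 integer_group" for g
    unfolding AP3_def by (rule pres_exp_sum_hom[OF exp_sum_P3_relators])
  then show "pres_exp_sum Ga \<in> hom AP3 integer_group" "pres_exp_sum Gb \<in> hom AP3 integer_group"
    "pres_exp_sum Gc \<in> hom AP3 integer_group" by this+
qed (simp_all add: a_def b_def c_def pres_exp_sum_pres_gen[OF exp_sum_P3_relators])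

end
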